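(* Let $T$ be the Kari–Culik set of 13 Wang tiles described in the context. Then $T$ tiles the plane and has positive entropy, i.e. $H(T)=\lim_{n\to\infty}\frac{\log C_T(n)}{n^2}>0$, where $C_T(n)$ is the number of distinct $n\times n$ square patterns that occur in at least one tiling of the plane $\mathbb{Z}^2$ by $T$.
   Context: A Wang tile is a unit square with a color on each of its four sides; a tiling of the plane is an assignment of a tile to every cell of $\mathbb{Z}^2$ such that adjacent tiles have equal colors on their common side (no rotations). The limit defining $H(T)$ exists. The Kari–Culik tileset $T$ uses horizontal-edge (top/bottom) colors $0,0',1,2$ and vertical-edge (left/right) colors from two disjoint state sets $\{s_0,s_1\}$ and $\{r_0,r_{1/3},r_{2/3}\}$. Writing a tile as (left, bottom, top, right), the 13 tiles are: $(s_0,0,0',s_0)$, $(s_1,0,0',s_1)$, $(s_0,1,2,s_0)$, $(s_1,1,2,s_1)$, $(s_0,1,1,s_1)$, $(s_1,0,1,s_0)$, $(s_1,0',1,s_0)$, $(r_0,2,1,r_{1/3})$, $(r_{1/3},2,1,r_{2/3})$, $(r_{1/3},1,0,r_0)$, $(r_{2/3},1,0,r_{1/3})$, $(r_0,1,1,r_{2/3})$, $(r_{2/3},2,0,r_0)$. *)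

theory Defs
  imports Complex_Main
begin

datatype hcol = H0 | H0' | H1 | H2

text \<open>Vertical-edge colours (left/right): s0, s1 and r0, r1/3, r2/3.\<close>
datatype vcol = S0 | S1 | R0 | R13 | R23

text \<open>A Wang tile written as (left, bottom, top, right).\<close>
type_synonym tile = "vcol \<times> hcol \<times> hcol \<times> vcol"

definition tleft :: "tile \<Rightarrow> vcol" where "tleft t = (case t of (l, b, u, r) \<Rightarrow> l)"
definition tbottom :: "tile \<Rightarrow> hcol" where "tbottom t = (case t of (l, b, u, r) \<Rightarrow> b)"
definition ttop :: "tile \<Rightarrow> hcol" where "ttop t = (case t of (l, b, u, r) \<Rightarrow> u)"
definition tright :: "tile \<Rightarrow> vcol" where "tright t = (case t of (l, b, u, r) \<Rightarrow> r)"

definition KC :: "tile set" where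
  "KC = {(S0, H0, H0', S0), (S1, H0, H0', S1), (S0, H1, H2, S0), (S1, H1, H2, S1),
         (S0, H1, H1, S1), (S1, H0, H1, S0), (S1, H0', H1, S0),
         (R0, H2, H1, R13), (R13, H2, H1, R23), (R13, H1, H0, R0),
         (R23, H1, H0, R13), (R0, H1, H1, R23), (R23, H2, H0, R0)}"

text \<open>A tiling of the plane Z^2 by T: cell (i,j), i the column (x), j the row (y).
  Horizontal neighbours share a vertical edge, vertical neighbours share a horizontal edge.\<close>
definition is_tiling :: "tile set \<Rightarrow> (int \<times> int \<Rightarrow> tile) \<Rightarrow> bool" where
  "is_tiling T f \<longleftrightarrow>
     (\<forall>i j. f (i, j) \<in> T) \<and>
     (\<forall>i j. tright (f (i, j)) = tleft (f (i + 1, j))) \<and>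
     (\<forall>i j. ttop (f (i, j)) = tbottom (f (i, j + 1)))"

definition pattern_at :: "(int \<times> int \<Rightarrow> tile) \<Rightarrow> nat \<Rightarrow> int \<Rightarrow> int \<Rightarrow> (nat \<times> nat \<Rightarrow> tile option)" where
  "pattern_at f n a b = (\<lambda>(i, j). if i < n \<and> j < n then Some (f (a + int i, b + int j)) else None)"

definition pattern_count :: "tile set \<Rightarrow> nat \<Rightarrow> nat" where
  "pattern_count T n = card {p. \<exists>f a b. is_tiling T f \<and> p = pattern_at f n a b}"

end

theory Submission
  imports Defs "HOL-Library.FuncSet"
begin

text \<open>
  Row \<open>j\<close> of the canonical Kari--Culik tiling encodes the real number
  \<open>x\<^sub>j = 6 powr frac (j log\<^sub>6 2) / 3 \<in> [1/3, 2)\<close>: the horizontal edges carry the Beatty digits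
  \<open>\<lfloor>(i + 1) x\<rfloor> - \<lfloor>i x\<rfloor>\<close>, and each row multiplies the digit sequence of \<open>x\<^sub>j\<close> by \<open>2\<close> (if
  \<open>x\<^sub>j < 1\<close>) or by \<open>1/3\<close> (otherwise), the vertical edges carrying the carry resp. the remainder.
  In logarithmic coordinates this is the rotation by \<open>log\<^sub>6 2\<close>, so \<open>x\<^sub>j\<^sub>+\<^sub>1\<close> is again of this form.

  Entropy comes from local flips: at the positions where the phase of the rotation and the
  position within the row lie in suitable small intervals, the canonical \<open>2 \<times> 2\<close> block can be
  replaced by another block with the same boundary. Such sites are pairwise separated and, since
  advancing by \<open>31\<close> rows resp. \<open>4\<close> columns moves the relevant fractional part by a small nonzero
  amount, occur in every square of a fixed size; hence an \<open>n \<times> n\<close> window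
  contains \<open>c n\<^sup>2\<close> of them, flipped independently, and \<open>C(n) \<ge> 2 ^ (c n\<^sup>2)\<close>. The limit of
  \<open>ln C(n) / n\<^sup>2\<close> exists (and equals its infimum) because cutting an \<open>n \<times> n\<close> pattern into
  \<open>m \<times> m\<close> blocks gives \<open>C(n) \<le> C(m) ^ (\<lceil>n/m\<rceil>\<^sup>2)\<close>.
\<close>

section \<open>Pattern entropy of a tileset\<close>

lemma LIMSEQ_INF_if_rescaled_le:
  fixes a :: "nat \<Rightarrow> real"
  assumes nonneg: "\<And>n. 0 \<le> a n"
    and rescaled_le: "\<And>m n. 0 < m \<Longrightarrow> 0 < n \<Longrightarrow> a n \<le> (1 + real m / real n)\<^sup>2 * a m"
  shows "a \<longlonglongrightarrow> (INF n\<in>{1..}. a n)"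
proof -
  have bdd: "bdd_below (a ` {1..})"
    using nonneg by (intro bdd_belowI[of _ 0]) auto
  show ?thesis
  proof (rule order_tendstoI)
    fix y assume "y < (INF n\<in>{1..}. a n)"
    then have "y < a n" if "1 \<le> n" for n
      using cInf_lower[OF _ bdd, of "a n"] that by fastforce
    then show "\<forall>\<^sub>F n in sequentially. y < a n"
      by (auto simp: eventually_sequentially)
  next
    fix y assume "(INF n\<in>{1..}. a n) < y"
    then obtain m where m: "1 \<le> m" "a m < y"
      using cInf_less_iff[OF _ bdd] by auto
    have "(\<lambda>n. (1 + real m / real n)\<^sup>2 * a m) \<longlonglongrightarrow> (1 + 0)\<^sup>2 * a m"
      by (intro tendsto_intros lim_const_over_n)
    then have "\<forall>\<^sub>F n in sequentially. (1 + real m / real n)\<^sup>2 * a m < y"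
      using m(2) by (intro order_tendstoD(2)) auto
    moreover have "\<forall>\<^sub>F n in sequentially. a n \<le> (1 + real m / real n)\<^sup>2 * a m"
      using rescaled_le m(1) by (auto simp: eventually_sequentially intro!: exI[of _ 1])
    ultimately show "\<forall>\<^sub>F n in sequentially. a n < y"
      by eventually_elim auto
  qed
qed

definition patterns :: "tile set \<Rightarrow> nat \<Rightarrow> (nat \<times> nat \<Rightarrow> tile option) set" where
  "patterns T n = {p. \<exists>f a b. is_tiling T f \<and> p = pattern_at f n a b}"

lemma pattern_count_eq_card: "pattern_count T n = card (patterns T n)"
  unfolding pattern_count_def patterns_def ..

lemma finite_patterns:
  assumes "finite T"
  shows "finite (patterns T n)"
proof (rule finite_subset)
  show "patterns T n \<subseteq> {p. \<forall>x. (x \<in> {..<n} \<times> {..<n} \<longrightarrow> p x \<in> insert None (Some ` T)) \<and>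
                                  (x \<notin> {..<n} \<times> {..<n} \<longrightarrow> p x = None)}"
    unfolding patterns_def pattern_at_def is_tiling_def by auto
  show "finite \<dots>"
    by (rule finite_set_of_finite_funs) (auto simp: assms)
qed

lemma pattern_count_pos:
  assumes "finite T" "is_tiling T f"
  shows "0 < pattern_count T n"
  using assms finite_patterns[OF assms(1)]
  unfolding pattern_count_eq_card by (auto simp: card_gt_0_iff patterns_def)

definition assemble_blocks ::
    "nat \<Rightarrow> nat \<Rightarrow> (nat \<times> nat \<Rightarrow> nat \<times> nat \<Rightarrow> 'a option) \<Rightarrow> nat \<times> nat \<Rightarrow> 'a option" where
  "assemble_blocks n m h =
     (\<lambda>(i, j). if i < n \<and> j < n then h (i div m, j div m) (i mod m, j mod m) else None)"

lemma pattern_at_eq_assemble_blocks: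
  assumes "0 < m" "n \<le> k * m"
  shows "pattern_at f n a b = assemble_blocks n m
           (restrict (\<lambda>(u, v). pattern_at f m (a + int (u * m)) (b + int (v * m))) ({..<k} \<times> {..<k}))"
proof
  fix x :: "nat \<times> nat"
  obtain i j where x: "x = (i, j)" by force
  show "pattern_at f n a b x = assemble_blocks n m
          (restrict (\<lambda>(u, v). pattern_at f m (a + int (u * m)) (b + int (v * m))) ({..<k} \<times> {..<k})) x"
  proof (cases "i < n \<and> j < n")
    case True
    then have "i div m < k" "j div m < k"
      using assms by (auto simp: div_less_iff_less_mult)
    moreover have "int (i div m) * int m + int (i mod m) = int i"
                  "int (j div m) * int m + int (j mod m) = int j"
      by (metis div_mult_mod_eq of_nat_add of_nat_mult)+
    ultimately show ?thesis
      using True assms(1) by (simp add: x pattern_at_def assemble_blocks_def add.assoc)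
  qed (auto simp: x pattern_at_def assemble_blocks_def)
qed

lemma pattern_count_le_power:
  assumes "finite T" "0 < m" "n \<le> k * m"
  shows "pattern_count T n \<le> pattern_count T m ^ (k * k)"
proof -
  let ?A = "{..<k} \<times> {..<k}"
  have "patterns T n \<subseteq> assemble_blocks n m ` (?A \<rightarrow>\<^sub>E patterns T m)"
  proof
    fix p assume "p \<in> patterns T n"
    then obtain f a b where f: "is_tiling T f" and p: "p = pattern_at f n a b"
      unfolding patterns_def by blast
    have "restrict (\<lambda>(u, v). pattern_at f m (a + int (u * m)) (b + int (v * m))) ?A
            \<in> ?A \<rightarrow>\<^sub>E patterns T m"
      using f by (auto simp: patterns_def)
    then show "p \<in> assemble_blocks n m ` (?A \<rightarrow>\<^sub>E patterns T m)"
      unfolding p pattern_at_eq_assemble_blocks[OF assms(2,3)] by blast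
  qed
  then have "card (patterns T n) \<le> card (assemble_blocks n m ` (?A \<rightarrow>\<^sub>E patterns T m))"
    by (intro card_mono finite_imageI finite_PiE finite_patterns assms(1)) auto
  also have "\<dots> \<le> card (?A \<rightarrow>\<^sub>E patterns T m)"
    by (rule card_image_le) (intro finite_PiE finite_patterns assms(1); simp)
  also have "\<dots> = card (patterns T m) ^ (k * k)"
    by (simp add: card_PiE card_cartesian_product)
  finally show ?thesis
    unfolding pattern_count_eq_card .
qed

lemma pattern_entropy_rescaled_le:
  assumes T: "finite T" "is_tiling T f" and m: "0 < m" and n: "0 < n"
  shows "ln (pattern_count T n) / (real n)\<^sup>2
           \<le> (1 + real m / real n)\<^sup>2 * (ln (pattern_count T m) / (real m)\<^sup>2)"
proof -
  define k where "k = n div m + 1"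
  have "n \<le> k * m"
    unfolding k_def using dividend_less_div_times[OF m, of n] by simp
  then have count_le: "pattern_count T n \<le> pattern_count T m ^ (k * k)"
    by (rule pattern_count_le_power[OF T(1) m])
  have "k * m \<le> n + m"
    unfolding k_def by simp
  then have "(real k * real m)\<^sup>2 \<le> (real n + real m)\<^sup>2"
    by (intro power_mono) (simp_all flip: of_nat_mult of_nat_add)
  then have k_le: "(real k)\<^sup>2 \<le> (real n + real m)\<^sup>2 / (real m)\<^sup>2"
    using m by (simp add: field_simps power_mult_distrib)
  have ln_m: "0 \<le> ln (real (pattern_count T m))"
    using pattern_count_pos[OF T] by (simp add: Suc_le_eq)
  have "ln (pattern_count T n) \<le> ln (real (pattern_count T m ^ (k * k)))"
    using count_le pattern_count_pos[OF T] by simp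
  also have "\<dots> = (real k)\<^sup>2 * ln (pattern_count T m)"
    by (simp add: ln_realpow power2_eq_square)
  also have "\<dots> \<le> (real n + real m)\<^sup>2 / (real m)\<^sup>2 * ln (pattern_count T m)"
    using k_le ln_m by (rule mult_right_mono)
  finally have "ln (pattern_count T n) / (real n)\<^sup>2
                  \<le> (real n + real m)\<^sup>2 / (real m)\<^sup>2 * ln (pattern_count T m) / (real n)\<^sup>2"
    by (rule divide_right_mono) simp
  also have "\<dots> = (1 + real m / real n)\<^sup>2 * (ln (pattern_count T m) / (real m)\<^sup>2)"
    using m n by (simp add: field_simps power2_eq_square)
  finally show ?thesis .
qed

lemma pattern_entropy_tendsto_INF:
  assumes "finite T" "is_tiling T f"
  shows "(\<lambda>n. ln (pattern_count T n) / (real n)\<^sup>2)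
           \<longlonglongrightarrow> (INF n\<in>{1..}. ln (pattern_count T n) / (real n)\<^sup>2)"
  using pattern_count_pos[OF assms] pattern_entropy_rescaled_le[OF assms]
  by (intro LIMSEQ_INF_if_rescaled_le) (simp_all add: Suc_le_eq)

section \<open>The canonical Kari--Culik tiling\<close>

definition alpha :: real where "alpha = log 6 2"
definition phase :: "int \<Rightarrow> real" where "phase j = frac (of_int j * alpha)"
definition row_val :: "int \<Rightarrow> real" where "row_val j = 6 powr phase j / 3"

lemma alpha_bounds: "0 < alpha" "alpha < 1"
  unfolding alpha_def by simp_all

lemma six_powr_alpha: "6 powr alpha = 2"
  unfolding alpha_def by simp

lemma phase_bounds: "0 \<le> phase j" "phase j < 1"
  unfolding phase_def by (auto simp: frac_lt_1)

lemma row_val_bounds: "1/3 \<le> row_val j" "row_val j < 2"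
proof -
  have "6 powr 0 \<le> 6 powr phase j" "6 powr phase j < 6 powr 1"
    using phase_bounds[of j] by (intro powr_mono powr_less_mono; simp)+
  then show "1/3 \<le> row_val j" "row_val j < 2"
    unfolding row_val_def by simp_all
qed

lemma phase_succ:
  "phase (j + 1) = (if phase j + alpha < 1 then phase j + alpha else phase j + alpha - 1)"
proof -
  have "phase (j + 1) = frac (phase j + alpha)"
    unfolding phase_def by (simp add: distrib_right frac_add)
  then show ?thesis
    using phase_bounds[of j] alpha_bounds by (auto simp: frac_add frac_eq)
qed

lemma row_val_lt_1_iff: "row_val j < 1 \<longleftrightarrow> phase j + alpha < 1"
proof -
  have "6 powr (phase j + alpha) = 2 * 6 powr phase j"
    by (simp add: powr_add six_powr_alpha)
  moreover have "6 powr (phase j + alpha) < 6 powr 1 \<longleftrightarrow> phase j + alpha < 1"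
    by (rule powr_less_cancel_iff) simp
  ultimately show ?thesis
    unfolding row_val_def by auto
qed

lemma row_val_succ: "row_val (j + 1) = (if row_val j < 1 then 2 * row_val j else row_val j / 3)"
proof (cases "phase j + alpha < 1")
  case True
  then show ?thesis
    using row_val_lt_1_iff[of j] by (simp add: phase_succ row_val_def powr_add six_powr_alpha)
next
  case False
  have "6 powr (phase j + alpha - 1) = 6 powr phase j * 2 / 6"
    by (simp add: powr_add powr_diff six_powr_alpha)
  then show ?thesis
    using False row_val_lt_1_iff[of j] by (simp add: phase_succ row_val_def)
qed

lemma floor_add_le: "\<lfloor>x + y\<rfloor> \<le> \<lfloor>x :: real\<rfloor> + \<lfloor>y\<rfloor> + 1"
  using floor_add[of x y] by (simp split: if_splits)

definition beatty_digit :: "real \<Rightarrow> int \<Rightarrow> int" where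
  "beatty_digit x i = \<lfloor>of_int (i + 1) * x\<rfloor> - \<lfloor>of_int i * x\<rfloor>"

lemma beatty_digit_bounds: "\<lfloor>x\<rfloor> \<le> beatty_digit x i" "beatty_digit x i \<le> \<lfloor>x\<rfloor> + 1"
  using le_floor_add[of "of_int i * x" x] floor_add_le[of "of_int i * x" x]
  unfolding beatty_digit_def by (simp_all add: distrib_right)

lemma floor_double_minus: "\<lfloor>2 * z\<rfloor> - 2 * \<lfloor>z :: real\<rfloor> \<in> {0, 1}"
  using le_floor_add[of z z] floor_add_le[of z z] unfolding mult_2 by simp arith

definition digit_col :: "bool \<Rightarrow> int \<Rightarrow> hcol" where
  "digit_col primed d = (if d = 0 then (if primed then H0' else H0) else if d = 1 then H1 else H2)"

text \<open>
  A carry \<open>c\<close> of the doubling rows is stored as the state \<open>s\<^sub>1\<^sub>-\<^sub>c\<close>, a remainder \<open>w\<close> of the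
  dividing rows as the state \<open>r\<^sub>(\<^sub>2\<^sub>-\<^sub>w\<^sub>)\<^sub>/\<^sub>3\<close>.
\<close>

definition carry_scol :: "int \<Rightarrow> vcol" where
  "carry_scol c = (if c = 0 then S1 else S0)"

definition carry_rcol :: "int \<Rightarrow> vcol" where
  "carry_rcol w = (if w = 0 then R23 else if w = 1 then R13 else R0)"

lemma KC_s_tile:
  assumes "dl \<in> {0, 1}" "dr \<in> {0, 1}" "d \<in> {0, 1}" "e = 2 * d + dr - dl" "0 \<le> e" "e \<le> 2"
    and "primed \<Longrightarrow> d = 0 \<Longrightarrow> 1 \<le> e"
  shows "(carry_scol dl, digit_col primed d, digit_col True e, carry_scol dr) \<in> KC"
proof -
  have "dl = 0 \<or> dl = 1" "dr = 0 \<or> dr = 1" "d = 0 \<or> d = 1"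
    using assms(1-3) by auto
  then show ?thesis
    using assms(4-7) unfolding KC_def digit_col_def carry_scol_def
    by (cases primed) (elim disjE; simp)+
qed

lemma KC_r_tile:
  assumes "wl \<in> {0, 1, 2}" "wr \<in> {0, 1, 2}" "d \<in> {1, 2}" "e \<in> {0, 1}" "wr = wl + d - 3 * e"
  shows "(carry_rcol wl, digit_col False d, digit_col False e, carry_rcol wr) \<in> KC"
proof -
  have "wl = 0 \<or> wl = 1 \<or> wl = 2" "d = 1 \<or> d = 2" "e = 0 \<or> e = 1"
    using assms(1,3,4) by auto
  then show ?thesis
    using assms(2,5) unfolding KC_def digit_col_def carry_rcol_def
    by (elim disjE; simp)
qed

definition kc_top_col :: "int \<Rightarrow> int \<Rightarrow> hcol" where
  "kc_top_col i j = digit_col (row_val j < 1) (beatty_digit (row_val (j + 1)) i)"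

definition kc_left_col :: "int \<Rightarrow> int \<Rightarrow> vcol" where
  "kc_left_col i j =
     (if row_val j < 1
      then carry_scol (\<lfloor>of_int i * row_val (j + 1)\<rfloor> - 2 * \<lfloor>of_int i * row_val j\<rfloor>)
      else carry_rcol (\<lfloor>of_int i * row_val j\<rfloor> mod 3))"

definition kc_canonical :: "int \<times> int \<Rightarrow> tile" where
  "kc_canonical =
     (\<lambda>(i, j). (kc_left_col i j, kc_top_col i (j - 1), kc_top_col i j, kc_left_col (i + 1) j))"

lemma kc_canonical_in_KC_if_row_val_lt_1:
  assumes row: "row_val j < 1"
  shows "kc_canonical (i, j) \<in> KC"
proof -
  let ?x = "row_val j"
  have x: "1/3 \<le> ?x" "?x < 1"
    using row_val_bounds[of j] row by auto
  have succ: "row_val (j + 1) = 2 * ?x"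
    using row_val_succ[of j] row by simp
  define carry where "carry k = \<lfloor>of_int k * (2 * ?x)\<rfloor> - 2 * \<lfloor>of_int k * ?x\<rfloor>" for k
  have carry: "carry k \<in> {0, 1}" for k
    using floor_double_minus[of "of_int k * ?x"] unfolding carry_def by (simp add: mult.left_commute)
  have "\<lfloor>?x\<rfloor> = 0"
    using x by (simp add: floor_eq_iff)
  then have d: "beatty_digit ?x i \<in> {0, 1}"
    using beatty_digit_bounds[of ?x i] by auto
  have "\<lfloor>2 * ?x\<rfloor> \<in> {0, 1}"
    using x by (auto simp: floor_eq_iff)
  then have e: "0 \<le> beatty_digit (2 * ?x) i" "beatty_digit (2 * ?x) i \<le> 2"
    using beatty_digit_bounds[of "2 * ?x" i] by auto
  have primed: "1 \<le> beatty_digit (2 * ?x) i" if "row_val (j - 1) < 1"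
  proof -
    have "2/3 \<le> ?x"
      using row_val_succ[of "j - 1"] row_val_bounds[of "j - 1"] that by simp
    then have "\<lfloor>2 * ?x\<rfloor> = 1"
      using x by (simp add: floor_eq_iff)
    then show ?thesis
      using beatty_digit_bounds[of "2 * ?x" i] by simp
  qed
  have "kc_canonical (i, j) = (carry_scol (carry i), digit_col (row_val (j - 1) < 1) (beatty_digit ?x i),
                               digit_col True (beatty_digit (2 * ?x) i), carry_scol (carry (i + 1)))"
    using row succ unfolding kc_canonical_def kc_left_col_def kc_top_col_def carry_def by simp
  also have "\<dots> \<in> KC"
  proof (rule KC_s_tile[OF carry carry d _ e])
    show "beatty_digit (2 * ?x) i = 2 * beatty_digit ?x i + carry (i + 1) - carry i"
      unfolding beatty_digit_def carry_def by simp
  qed (use primed in blast)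
  finally show ?thesis .
qed

lemma kc_canonical_in_KC_if_row_val_ge_1:
  assumes row: "\<not> row_val j < 1"
  shows "kc_canonical (i, j) \<in> KC"
proof -
  let ?x = "row_val j"
  have x: "1 \<le> ?x" "?x < 2"
    using row_val_bounds[of j] row by auto
  have succ: "row_val (j + 1) = ?x / 3"
    using row_val_succ[of j] row by simp
  define w where "w k = \<lfloor>of_int k * ?x\<rfloor> mod 3" for k
  have w: "w k \<in> {0, 1, 2}" for k
    unfolding w_def by auto
  have "\<lfloor>?x\<rfloor> = 1" "\<lfloor>?x / 3\<rfloor> = 0"
    using x by (simp_all add: floor_eq_iff)
  then have d: "beatty_digit ?x i \<in> {1, 2}" and e: "beatty_digit (?x / 3) i \<in> {0, 1}"
    using beatty_digit_bounds[of ?x i] beatty_digit_bounds[of "?x / 3" i] by auto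
  have thirds: "\<lfloor>of_int k * (?x / 3)\<rfloor> = \<lfloor>of_int k * ?x\<rfloor> div 3" for k
    using floor_divide_real_eq_div[of 3 "of_int k * ?x"] by simp
  have w_succ: "w (i + 1) = w i + beatty_digit ?x i - 3 * beatty_digit (?x / 3) i"
    using minus_mult_div_eq_mod[of "\<lfloor>of_int i * ?x\<rfloor>" 3, symmetric]
      minus_mult_div_eq_mod[of "\<lfloor>of_int (i + 1) * ?x\<rfloor>" 3, symmetric]
    unfolding w_def beatty_digit_def thirds by (simp add: algebra_simps)
  have "digit_col (row_val (j - 1) < 1) (beatty_digit ?x i) = digit_col False (beatty_digit ?x i)"
    using d by (auto simp: digit_col_def)
  then have "kc_canonical (i, j) = (carry_rcol (w i), digit_col False (beatty_digit ?x i),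
                                   digit_col False (beatty_digit (?x / 3) i), carry_rcol (w (i + 1)))"
    using row unfolding kc_canonical_def kc_left_col_def kc_top_col_def w_def by (simp add: succ)
  also have "\<dots> \<in> KC"
    by (rule KC_r_tile[OF w w d e w_succ])
  finally show ?thesis .
qed

lemma kc_canonical_tiling: "is_tiling KC kc_canonical"
  using kc_canonical_in_KC_if_row_val_lt_1 kc_canonical_in_KC_if_row_val_ge_1
  unfolding is_tiling_def by (auto simp: kc_canonical_def tleft_def tright_def ttop_def tbottom_def)

section \<open>Local flips\<close>

text \<open>
  The constants make \<open>row_val j \<in> [0.708, 0.72]\<close> and the fractional part of \<open>i * row_val j / 3\<close>
  lie in \<open>[0.601, 0.665]\<close>, which fixes every floor in the \<open>2 \<times> 2\<close> block at \<open>(i, j)\<close>; both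
  intervals are longer than the steps of the rotations used below to find such positions.
\<close>

definition good_row :: "int \<Rightarrow> bool" where
  "good_row j \<longleftrightarrow> log 6 2.124 \<le> phase j \<and> phase j \<le> log 6 2.16"

definition flip_site :: "int \<times> int \<Rightarrow> bool" where
  "flip_site = (\<lambda>(i, j). good_row j \<and>
      0.601 \<le> frac (of_int i * row_val j / 3) \<and> frac (of_int i * row_val j / 3) \<le> 0.665)"

lemma row_val_if_good_row:
  assumes "good_row j"
  shows "0.708 \<le> row_val j" "row_val j \<le> 0.72"
proof -
  have "6 powr log 6 2.124 \<le> 6 powr phase j" "6 powr phase j \<le> 6 powr log 6 2.16"
    using assms unfolding good_row_def by (intro powr_mono; simp)+
  then show "0.708 \<le> row_val j" "row_val j \<le> 0.72"
    unfolding row_val_def by simp_all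
qed

lemma kc_canonical_at_flip_site:
  assumes "flip_site (i, j)"
  shows "kc_canonical (i, j) = (S0, H1, H2, S0)" "kc_canonical (i + 1, j) = (S0, H1, H1, S1)"
    "kc_canonical (i, j + 1) = (R23, H2, H0, R0)" "kc_canonical (i + 1, j + 1) = (R0, H1, H1, R23)"
proof -
  let ?x = "row_val j"
  have x: "0.708 \<le> ?x" "?x \<le> 0.72"
    using assms row_val_if_good_row unfolding flip_site_def by auto
  define q where "q = \<lfloor>of_int i * ?x / 3\<rfloor>"
  define t where "t = frac (of_int i * ?x / 3)"
  have t: "0.601 \<le> t" "t \<le> 0.665"
    using assms unfolding flip_site_def t_def by auto
  have ix: "of_int i * ?x = 3 * of_int q + 3 * t" "of_int i * (2 * ?x) = 6 * of_int q + 6 * t"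
    "of_int i * (2 * ?x / 3) = 2 * of_int q + 2 * t"
    unfolding q_def t_def frac_def by simp_all
  have succ: "row_val (j + 1) = 2 * ?x" "row_val (2 + j) = 2 * ?x / 3"
    using row_val_succ[of j] row_val_succ[of "j + 1"] x by (simp_all add: add.commute)
  have floors:
    "\<lfloor>of_int i * ?x\<rfloor> = 3 * q + 1" "\<lfloor>of_int (i + 1) * ?x\<rfloor> = 3 * q + 2"
    "\<lfloor>of_int (i + 1 + 1) * ?x\<rfloor> = 3 * q + 3"
    "\<lfloor>of_int i * (2 * ?x)\<rfloor> = 6 * q + 3" "\<lfloor>of_int (i + 1) * (2 * ?x)\<rfloor> = 6 * q + 5"
    "\<lfloor>of_int (i + 1 + 1) * (2 * ?x)\<rfloor> = 6 * q + 6"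
    "\<lfloor>of_int i * (2 * ?x / 3)\<rfloor> = 2 * q + 1" "\<lfloor>of_int (i + 1) * (2 * ?x / 3)\<rfloor> = 2 * q + 1"
    "\<lfloor>of_int (i + 1 + 1) * (2 * ?x / 3)\<rfloor> = 2 * q + 2"
    using x t by (simp_all add: floor_eq_iff distrib_right ix del: floor_add2)
  have "(6 * q + 3) mod 3 = 0" "(6 * q + 5) mod 3 = 2" "(6 * q + 6) mod 3 = 0"
    by presburger+
  then show "kc_canonical (i, j) = (S0, H1, H2, S0)" "kc_canonical (i + 1, j) = (S0, H1, H1, S1)"
    "kc_canonical (i, j + 1) = (R23, H2, H0, R0)" "kc_canonical (i + 1, j + 1) = (R0, H1, H1, R23)"
    using x floors unfolding kc_canonical_def kc_left_col_def kc_top_col_def beatty_digit_def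
    by (simp_all add: succ digit_col_def carry_scol_def carry_rcol_def)
qed

lemma good_row_not_succ: "good_row j \<Longrightarrow> \<not> good_row (j + 1)"
  using row_val_if_good_row[of j] row_val_if_good_row[of "j + 1"] row_val_succ[of j] by auto

lemma flip_site_not_succ: "flip_site (i, j) \<Longrightarrow> \<not> flip_site (i + 1, j)"
proof
  assume sites: "flip_site (i, j)" "flip_site (i + 1, j)"
  let ?y = "row_val j / 3"
  have y: "0.236 \<le> ?y" "?y \<le> 0.24"
    using sites row_val_if_good_row[of j] unfolding flip_site_def by auto
  have t: "0.601 \<le> frac (of_int i * ?y)" "frac (of_int i * ?y) \<le> 0.665"
    using sites(1) unfolding flip_site_def by simp_all
  have "frac (of_int (i + 1) * row_val j / 3) = frac (of_int i * ?y + ?y)"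
    by (simp add: distrib_right add_divide_distrib)
  also have "\<dots> = frac (of_int i * ?y) + ?y"
    using t y by (subst frac_add) (auto simp: frac_eq)
  finally show False
    using sites(2) t y unfolding flip_site_def by auto
qed

lemma flip_sites_eq_if_close:
  assumes "flip_site (i, j)" "flip_site (i', j')" "\<bar>i - i'\<bar> \<le> 1" "\<bar>j - j'\<bar> \<le> 1"
  shows "(i, j) = (i', j')"
proof -
  have "good_row j" "good_row j'"
    using assms(1,2) unfolding flip_site_def by auto
  moreover have "j' = j + 1 \<or> j = j' + 1" if "j \<noteq> j'"
    using assms(4) that by auto
  ultimately have "j = j'"
    using good_row_not_succ by blast
  moreover have "i' = i + 1 \<or> i = i' + 1" if "i \<noteq> i'"
    using assms(3) that by auto
  ultimately show ?thesis
    using assms(1,2) flip_site_not_succ by blast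
qed

text \<open>
  The flipped block has the boundary colours of the canonical block at a flip site; inside, the
  digits \<open>2, 1\<close> on the two middle horizontal edges become \<open>1, 2\<close>.
\<close>

definition kc_flip :: "(int \<times> int) set \<Rightarrow> int \<times> int \<Rightarrow> tile" where
  "kc_flip F = (\<lambda>(i, j).
     if (i, j) \<in> F then (S0, H1, H1, S1)
     else if (i - 1, j) \<in> F then (S1, H1, H2, S1)
     else if (i, j - 1) \<in> F then (R23, H1, H0, R13)
     else if (i - 1, j - 1) \<in> F then (R13, H2, H1, R23)
     else kc_canonical (i, j))"

lemma kc_flip_eq_kc_canonical:
  assumes "F \<subseteq> Collect flip_site" "flip_site (i, j)" "(i, j) \<notin> F"
  shows "kc_flip F (i, j) = kc_canonical (i, j)"
proof -
  have "(i', j') \<notin> F" if "\<bar>i - i'\<bar> \<le> 1" "\<bar>j - j'\<bar> \<le> 1" for i' j'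
    using assms flip_sites_eq_if_close[OF assms(2) _ that] by blast
  then show ?thesis
    using assms(3) unfolding kc_flip_def by simp
qed

context
  fixes F :: "(int \<times> int) set"
  assumes sites: "F \<subseteq> Collect flip_site"
begin

lemma not_in_flip_sites_if_close:
  "(i, j) \<in> F \<Longrightarrow> \<bar>i - i'\<bar> \<le> 1 \<Longrightarrow> \<bar>j - j'\<bar> \<le> 1 \<Longrightarrow> (i', j') \<noteq> (i, j) \<Longrightarrow> (i', j') \<notin> F"
  using sites flip_sites_eq_if_close[of i j i' j'] by auto

lemma kc_flip_in_KC: "kc_flip F p \<in> KC"
  using kc_canonical_tiling unfolding is_tiling_def
  by (auto simp: kc_flip_def KC_def split: prod.splits)

lemma kc_flip_right_eq:
  "(i, j) \<notin> F \<Longrightarrow> (i, j - 1) \<notin> F \<Longrightarrow> tright (kc_flip F (i, j)) = tright (kc_canonical (i, j))"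
  using sites kc_canonical_at_flip_site[of "i - 1" j] kc_canonical_at_flip_site[of "i - 1" "j - 1"]
  by (auto simp: kc_flip_def tright_def)

lemma kc_flip_left_eq:
  "(i - 1, j) \<notin> F \<Longrightarrow> (i - 1, j - 1) \<notin> F \<Longrightarrow> tleft (kc_flip F (i, j)) = tleft (kc_canonical (i, j))"
  using sites kc_canonical_at_flip_site[of i j] kc_canonical_at_flip_site[of i "j - 1"]
  by (auto simp: kc_flip_def tleft_def)

lemma kc_flip_top_eq:
  "(i, j) \<notin> F \<Longrightarrow> (i - 1, j) \<notin> F \<Longrightarrow> ttop (kc_flip F (i, j)) = ttop (kc_canonical (i, j))"
  using sites kc_canonical_at_flip_site[of i "j - 1"] kc_canonical_at_flip_site[of "i - 1" "j - 1"]
  by (auto simp: kc_flip_def ttop_def)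

lemma kc_flip_bottom_eq:
  "(i, j - 1) \<notin> F \<Longrightarrow> (i - 1, j - 1) \<notin> F \<Longrightarrow> tbottom (kc_flip F (i, j)) = tbottom (kc_canonical (i, j))"
  using sites kc_canonical_at_flip_site[of i j] kc_canonical_at_flip_site[of "i - 1" j]
  by (auto simp: kc_flip_def tbottom_def)

lemma kc_flip_right_left: "tright (kc_flip F (i, j)) = tleft (kc_flip F (i + 1, j))"
proof -
  consider "(i, j) \<in> F" | "(i, j) \<notin> F" "(i, j - 1) \<in> F" | "(i, j) \<notin> F" "(i, j - 1) \<notin> F"
    by blast
  then show ?thesis
  proof cases
    case 1
    have "(i + 1, j) \<notin> F"
      by (rule not_in_flip_sites_if_close[OF 1]) auto
    with 1 show ?thesis
      by (simp add: kc_flip_def tright_def tleft_def)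
  next
    case 2
    have "(i - 1, j) \<notin> F" "(i + 1, j) \<notin> F" "(i + 1, j - 1) \<notin> F"
      by (rule not_in_flip_sites_if_close[OF 2(2)]; auto)+
    with 2 show ?thesis
      by (simp add: kc_flip_def tright_def tleft_def)
  next
    case 3
    moreover have "tright (kc_canonical (i, j)) = tleft (kc_canonical (i + 1, j))"
      using kc_canonical_tiling unfolding is_tiling_def by blast
    ultimately show ?thesis
      using kc_flip_right_eq kc_flip_left_eq[of "i + 1" j] by simp
  qed
qed

lemma kc_flip_top_bottom: "ttop (kc_flip F (i, j)) = tbottom (kc_flip F (i, j + 1))"
proof -
  consider "(i, j) \<in> F" | "(i, j) \<notin> F" "(i - 1, j) \<in> F" | "(i, j) \<notin> F" "(i - 1, j) \<notin> F"
    by blast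
  then show ?thesis
  proof cases
    case 1
    have "(i, j + 1) \<notin> F" "(i - 1, j + 1) \<notin> F"
      by (rule not_in_flip_sites_if_close[OF 1]; auto)+
    with 1 show ?thesis
      by (simp add: kc_flip_def ttop_def tbottom_def)
  next
    case 2
    have "(i, j + 1) \<notin> F" "(i - 1, j + 1) \<notin> F"
      by (rule not_in_flip_sites_if_close[OF 2(2)]; auto)+
    with 2 show ?thesis
      by (simp add: kc_flip_def ttop_def tbottom_def)
  next
    case 3
    moreover have "ttop (kc_canonical (i, j)) = tbottom (kc_canonical (i, j + 1))"
      using kc_canonical_tiling unfolding is_tiling_def by blast
    ultimately show ?thesis
      using kc_flip_top_eq kc_flip_bottom_eq[of i "j + 1"] by simp
  qed
qed

lemma kc_flip_tiling: "is_tiling KC (kc_flip F)"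
  unfolding is_tiling_def using kc_flip_in_KC kc_flip_right_left kc_flip_top_bottom by blast

end

section \<open>Density of flip sites\<close>

lemma orbit_hits_interval_pos:
  fixes b \<phi> p q :: real
  assumes "0 < b" "b \<le> q - p"
  shows "\<exists>t::nat. real t \<le> 1 / b + 1 \<and> (\<exists>z::int. p \<le> \<phi> + t * b - z \<and> \<phi> + t * b - z \<le> q)"
proof -
  define \<psi> where "\<psi> = \<phi> - of_int \<lceil>\<phi> - q\<rceil>"
  have \<psi>: "\<psi> \<le> q" "q - 1 < \<psi>"
    unfolding \<psi>_def by linarith+
  show ?thesis
  proof (cases "p \<le> \<psi>")
    case True
    then show ?thesis
      using \<psi> assms by (intro exI[of _ 0]) (auto intro!: exI[of _ "\<lceil>\<phi> - q\<rceil>"] simp: \<psi>_def)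
  next
    case False
    define t where "t = nat \<lceil>(p - \<psi>) / b\<rceil>"
    have "0 < (p - \<psi>) / b"
      using False assms by simp
    then have t: "(p - \<psi>) / b \<le> real t" "real t < (p - \<psi>) / b + 1"
      unfolding t_def by linarith+
    then have "p - \<psi> \<le> real t * b" "real t * b < p - \<psi> + b"
      using assms by (simp_all add: field_simps)
    moreover have "(p - \<psi>) / b \<le> 1 / b"
      using assms \<psi> by (intro divide_right_mono) auto
    ultimately show ?thesis
      using t assms by (intro exI[of _ t]) (auto intro!: exI[of _ "\<lceil>\<phi> - q\<rceil>"] simp: \<psi>_def)
  qed
qed

lemma frac_orbit_hits_interval:
  fixes b \<phi> p q :: real
  assumes "b \<noteq> 0" "\<bar>b\<bar> \<le> q - p" "0 \<le> p" "q < 1"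
  shows "\<exists>t::nat. real t \<le> 1 / \<bar>b\<bar> + 1 \<and> p \<le> frac (\<phi> + t * b) \<and> frac (\<phi> + t * b) \<le> q"
proof -
  obtain t :: nat and z :: int where t: "real t \<le> 1 / \<bar>b\<bar> + 1"
    and z: "p \<le> \<phi> + t * b + of_int z" "\<phi> + t * b + of_int z \<le> q"
  proof (cases "0 < b")
    case True
    then obtain t :: nat and z :: int where "real t \<le> 1 / b + 1"
      "p \<le> \<phi> + t * b - z" "\<phi> + t * b - z \<le> q"
      using orbit_hits_interval_pos[where b = b and p = p and q = q and \<phi> = \<phi>] True assms by auto
    then show ?thesis
      using True that[of t "- z"] by auto
  next
    case False
    then obtain t :: nat and z :: int where "real t \<le> 1 / (- b) + 1"
      "- q \<le> - \<phi> + t * (- b) - z" "- \<phi> + t * (- b) - z \<le> - p"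
      using orbit_hits_interval_pos[where b = "- b" and p = "- q" and q = "- p" and \<phi> = "- \<phi>"] assms
      by auto
    then show ?thesis
      using False that[of t z] by auto
  qed
  have "frac (\<phi> + t * b) = frac (\<phi> + t * b + of_int z)"
    by simp
  also have "\<dots> = \<phi> + t * b + of_int z"
    by (rule frac_eq_id) (use z assms in auto)
  finally have "frac (\<phi> + t * b) = \<phi> + t * b + of_int z" .
  then show ?thesis
    using t z by auto
qed

text \<open>Since \<open>2 ^ 31 \<approx> 6 ^ 12\<close>, advancing \<open>31\<close> rows moves the phase by a small negative amount.\<close>

lemma thirty_one_alpha_bounds: "31 * alpha < 12" "12 - 31 * alpha \<le> log 6 2.16 - log 6 2.124"
proof -
  have powers: "31 * alpha = log 6 (2 ^ 31)" "12 = log 6 (6 ^ 12 :: real)"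
    unfolding alpha_def using log_nat_power[of 2 6 31] log_nat_power[of 6 6 12] by simp_all
  show "31 * alpha < 12"
    unfolding powers by simp
  have "log 6 (6 ^ 12) + log 6 2.124 \<le> log 6 (2 ^ 31) + log 6 (2.16 :: real)"
    by (subst (1 2) log_mult_pos[symmetric]) simp_all
  then show "12 - 31 * alpha \<le> log 6 2.16 - log 6 2.124"
    unfolding powers by simp
qed

lemma good_rows_syndetic: "\<exists>R. \<forall>j0. \<exists>j. j0 \<le> j \<and> j \<le> j0 + int R \<and> good_row j"
proof -
  define \<beta> where "\<beta> = 31 * alpha - 12"
  have \<beta>: "\<beta> \<noteq> 0" "\<bar>\<beta>\<bar> \<le> log 6 2.16 - log 6 2.124"
    using thirty_one_alpha_bounds unfolding \<beta>_def by auto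
  define N where "N = nat \<lceil>1 / \<bar>\<beta>\<bar> + 1\<rceil>"
  have "\<exists>j. j0 \<le> j \<and> j \<le> j0 + int (31 * N) \<and> good_row j" for j0
  proof -
    obtain t :: nat where t: "real t \<le> 1 / \<bar>\<beta>\<bar> + 1"
      and good: "log 6 2.124 \<le> frac (of_int j0 * alpha + t * \<beta>)"
        "frac (of_int j0 * alpha + t * \<beta>) \<le> log 6 2.16"
      using frac_orbit_hits_interval[OF \<beta>, of "of_int j0 * alpha"] by auto
    have "of_int (j0 + 31 * int t) * alpha = (of_int j0 * alpha + t * \<beta>) + of_int (12 * int t)"
      unfolding \<beta>_def by (simp add: algebra_simps)
    then have "phase (j0 + 31 * int t) = frac (of_int j0 * alpha + t * \<beta>)"
      unfolding phase_def by (simp only: frac_add_of_int_right)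
    then have "good_row (j0 + 31 * int t)"
      using good unfolding good_row_def by simp
    moreover have "t \<le> N"
      unfolding N_def using t by linarith
    ultimately show ?thesis
      by (intro exI[of _ "j0 + 31 * int t"]) auto
  qed
  then show ?thesis
    by blast
qed

lemma flip_sites_syndetic:
  assumes "good_row j"
  shows "\<exists>i. i0 \<le> i \<and> i \<le> i0 + 104 \<and> flip_site (i, j)"
proof -
  define y where "y = row_val j / 3"
  define b where "b = 4 * y - 1"
  have y: "0.236 \<le> y" "y \<le> 0.24"
    using row_val_if_good_row[OF assms] unfolding y_def by auto
  then have b: "b \<noteq> 0" "\<bar>b\<bar> \<le> 0.665 - 0.601" "0.04 \<le> \<bar>b\<bar>"
    unfolding b_def by auto
  obtain t :: nat where t: "real t \<le> 1 / \<bar>b\<bar> + 1"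
    and site: "0.601 \<le> frac (of_int i0 * y + t * b)" "frac (of_int i0 * y + t * b) \<le> 0.665"
    using frac_orbit_hits_interval[OF b(1,2), of "of_int i0 * y"] by auto
  have "1 / \<bar>b\<bar> \<le> 1 / 0.04"
    using b by (intro divide_left_mono) auto
  then have "t \<le> 26"
    using t by simp
  moreover have "of_int (i0 + 4 * int t) * row_val j / 3 = (of_int i0 * y + t * b) + of_int (int t)"
    unfolding b_def y_def by (simp add: algebra_simps)
  then have "frac (of_int (i0 + 4 * int t) * row_val j / 3) = frac (of_int i0 * y + t * b)"
    by (simp only: frac_add_of_int_right)
  then have "flip_site (i0 + 4 * int t, j)"
    using assms site unfolding flip_site_def by simp
  ultimately show ?thesis
    by (intro exI[of _ "i0 + 4 * int t"]) auto
qed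

lemma nat_div_eq_if_in_block:
  assumes "int (c * R) \<le> i" "i < int ((c + 1) * R)"
  shows "nat i div R = c"
proof (rule div_nat_eqI)
  have "c * R \<le> nat i" "nat i < (c + 1) * R"
    using assms by linarith+
  then show "R * c \<le> nat i" "nat i < R * Suc c"
    by (simp_all add: mult.commute)
qed

lemma card_points_in_square_ge:
  fixes S :: "int \<times> int \<Rightarrow> bool" and m R :: nat
  assumes blocks: "\<And>c d. c < m div R \<Longrightarrow> d < m div R \<Longrightarrow> \<exists>i j. S (i, j) \<and>
             int (c * R) \<le> i \<and> i < int ((c + 1) * R) \<and> int (d * R) \<le> j \<and> j < int ((d + 1) * R)"
  shows "(m div R)\<^sup>2 \<le> card {p \<in> {0..<int m} \<times> {0..<int m}. S p}"
proof -
  let ?B = "m div R" and ?P = "{p \<in> {0..<int m} \<times> {0..<int m}. S p}"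
  let ?block = "\<lambda>(i, j). (nat i div R, nat j div R)"
  have "{..<?B} \<times> {..<?B} \<subseteq> ?block ` ?P"
  proof clarify
    fix c d assume cd: "c < ?B" "d < ?B"
    then obtain i j where ij: "S (i, j)" "int (c * R) \<le> i" "i < int ((c + 1) * R)"
      "int (d * R) \<le> j" "j < int ((d + 1) * R)"
      using blocks by blast
    have "(c + 1) * R \<le> ?B * R" "(d + 1) * R \<le> ?B * R"
      using cd by (intro mult_le_mono1; simp)+
    then have "int ((c + 1) * R) \<le> int m" "int ((d + 1) * R) \<le> int m"
      using div_times_less_eq_dividend[of m R] by linarith+
    moreover have "0 \<le> int (c * R)" "0 \<le> int (d * R)"
      by simp_all
    ultimately have "(i, j) \<in> ?P"
      using ij by (simp only: mem_Collect_eq mem_Times_iff atLeastLessThan_iff fst_conv snd_conv)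
        (intro conjI TrueI; linarith)
    moreover have "nat i div R = c" "nat j div R = d"
      using ij by (simp_all add: nat_div_eq_if_in_block)
    ultimately show "(c, d) \<in> ?block ` ?P"
      by force
  qed
  then have "card ({..<?B} \<times> {..<?B}) \<le> card (?block ` ?P)"
    by (intro card_mono finite_imageI) auto
  also have "\<dots> \<le> card ?P"
    by (intro card_image_le) auto
  finally show ?thesis
    by (simp add: power2_eq_square card_cartesian_product)
qed

lemma flip_sites_dense:
  obtains R :: nat where "0 < R" "\<And>c d. \<exists>i j. flip_site (i, j) \<and>
      int (c * R) \<le> i \<and> i < int ((c + 1) * R) \<and> int (d * R) \<le> j \<and> j < int ((d + 1) * R)"
proof -
  obtain G where G: "\<And>j0. \<exists>j. j0 \<le> j \<and> j \<le> j0 + int G \<and> good_row j"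
    using good_rows_syndetic by blast
  define R where "R = G + 105"
  have "\<exists>i j. flip_site (i, j) \<and>
      int (c * R) \<le> i \<and> i < int ((c + 1) * R) \<and> int (d * R) \<le> j \<and> j < int ((d + 1) * R)" for c d
  proof -
    obtain j where j: "int (d * R) \<le> j" "j \<le> int (d * R) + int G" "good_row j"
      using G by blast
    obtain i where i: "int (c * R) \<le> i" "i \<le> int (c * R) + 104" "flip_site (i, j)"
      using flip_sites_syndetic[OF j(3)] by blast
    have "int ((c + 1) * R) = int (c * R) + int G + 105" "int ((d + 1) * R) = int (d * R) + int G + 105"
      unfolding R_def by (simp_all add: algebra_simps)
    then show ?thesis
      using i j by (intro exI[of _ i] exI[of _ j]) auto
  qed
  then show thesis
    using that[of R] unfolding R_def by auto
qed

definition flip_sites_in :: "nat \<Rightarrow> (int \<times> int) set" where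
  "flip_sites_in n = {p \<in> {0..<int n - 1} \<times> {0..<int n - 1}. flip_site p}"

lemma finite_flip_sites_in: "finite (flip_sites_in n)"
  unfolding flip_sites_in_def by auto

lemma real_div_pred_ge:
  fixes n R :: nat
  assumes "0 < R" "2 * R + 2 \<le> n"
  shows "real n / (2 * real R) \<le> real ((n - 1) div R)"
proof -
  have "n - 1 < R + (n - 1) div R * R"
    by (rule dividend_less_div_times[OF assms(1)])
  then have "n \<le> R + (n - 1) div R * R"
    using assms(2) by linarith
  then have "real n \<le> real R + real ((n - 1) div R) * real R"
    by (metis of_nat_add of_nat_le_iff of_nat_mult)
  moreover have "2 * real R + 2 \<le> real n"
    using assms(2) by linarith
  ultimately show ?thesis
    using assms(1) by (simp add: field_simps)
qed

lemma card_flip_sites_in_ge: "\<exists>c>0. \<forall>\<^sub>F n in sequentially. c * (real n)\<^sup>2 \<le> card (flip_sites_in n)"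
proof -
  obtain R where R: "0 < R" and dense: "\<And>c d. \<exists>i j. flip_site (i, j) \<and>
      int (c * R) \<le> i \<and> i < int ((c + 1) * R) \<and> int (d * R) \<le> j \<and> j < int ((d + 1) * R)"
    using flip_sites_dense by blast
  have "(real n / (2 * real R))\<^sup>2 \<le> card (flip_sites_in n)" if n: "2 * R + 2 \<le> n" for n
  proof -
    have "(real n / (2 * real R))\<^sup>2 \<le> real (((n - 1) div R)\<^sup>2)"
      unfolding of_nat_power by (intro power_mono real_div_pred_ge R n) simp
    also have "((n - 1) div R)\<^sup>2 \<le> card (flip_sites_in n)"
      using card_points_in_square_ge[of "n - 1" R flip_site] dense n
      unfolding flip_sites_in_def by (simp add: of_nat_diff)
    finally show ?thesis
      by simp
  qed
  then have "\<forall>\<^sub>F n in sequentially. 1 / (4 * (real R)\<^sup>2) * (real n)\<^sup>2 \<le> card (flip_sites_in n)"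
    unfolding eventually_sequentially by (intro exI[of _ "2 * R + 2"]) (simp add: power_divide field_simps)
  moreover have "0 < 1 / (4 * (real R)\<^sup>2)"
    using R by simp
  ultimately show ?thesis
    by blast
qed

section \<open>Positive entropy\<close>

lemma finite_KC: "finite KC"
  unfolding KC_def by simp

lemma two_pow_card_flip_sites_in_le: "2 ^ card (flip_sites_in n) \<le> pattern_count KC n"
proof -
  let ?W = "flip_sites_in n" and ?pat = "\<lambda>F. pattern_at (kc_flip F) n 0 0"
  have recover: "F = {(i, j) \<in> ?W. ?pat F (nat i, nat j) = Some (S0, H1, H1, S1)}" if "F \<subseteq> ?W" for F
  proof -
    have sites: "F \<subseteq> Collect flip_site"
      using that unfolding flip_sites_in_def by auto
    have "?pat F (nat i, nat j) = Some (kc_flip F (i, j))" if "(i, j) \<in> ?W" for i j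
      using that unfolding flip_sites_in_def pattern_at_def by auto
    moreover have "kc_flip F (i, j) = (S0, H1, H1, S1) \<longleftrightarrow> (i, j) \<in> F" if "(i, j) \<in> ?W" for i j
    proof (cases "(i, j) \<in> F")
      case False
      moreover have "flip_site (i, j)"
        using that unfolding flip_sites_in_def by auto
      ultimately show ?thesis
        using kc_flip_eq_kc_canonical[OF sites] kc_canonical_at_flip_site(1) by simp
    qed (simp add: kc_flip_def)
    ultimately show ?thesis
      using that by auto
  qed
  have "inj_on ?pat (Pow ?W)"
  proof (rule inj_onI)
    fix F F' assume "F \<in> Pow ?W" "F' \<in> Pow ?W" and pat_eq: "?pat F = ?pat F'"
    then have "F = {(i, j) \<in> ?W. ?pat F (nat i, nat j) = Some (S0, H1, H1, S1)}"
      and "F' = {(i, j) \<in> ?W. ?pat F' (nat i, nat j) = Some (S0, H1, H1, S1)}"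
      using recover by blast+
    then show "F = F'"
      unfolding pat_eq by argo
  qed
  moreover have "?pat ` Pow ?W \<subseteq> patterns KC n"
    using kc_flip_tiling unfolding patterns_def flip_sites_in_def by blast
  ultimately have "card (Pow ?W) \<le> card (patterns KC n)"
    by (intro card_inj_on_le finite_patterns finite_KC)
  then show ?thesis
    by (simp add: card_Pow finite_flip_sites_in pattern_count_eq_card)
qed

lemma kc_pattern_entropy_eventually_ge:
  "\<exists>c>0. \<forall>\<^sub>F n in sequentially. c \<le> ln (pattern_count KC n) / (real n)\<^sup>2"
proof -
  obtain c where c: "0 < c" and sites: "\<forall>\<^sub>F n in sequentially. c * (real n)\<^sup>2 \<le> card (flip_sites_in n)"
    using card_flip_sites_in_ge by blast
  have entropy_ge: "c * ln 2 \<le> ln (pattern_count KC n) / (real n)\<^sup>2"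
    if n: "c * (real n)\<^sup>2 \<le> card (flip_sites_in n)" "0 < n" for n
  proof -
    have "c * (real n)\<^sup>2 * ln 2 \<le> card (flip_sites_in n) * ln 2"
      using n(1) by (rule mult_right_mono) simp
    also have "\<dots> = ln (2 ^ card (flip_sites_in n))"
      by (simp add: ln_realpow)
    also have "\<dots> \<le> ln (pattern_count KC n)"
    proof -
      have "(2::real) ^ card (flip_sites_in n) \<le> real (pattern_count KC n)"
        using two_pow_card_flip_sites_in_le[of n] by (metis of_nat_le_iff of_nat_numeral of_nat_power)
      then show ?thesis
        using pattern_count_pos[OF finite_KC kc_canonical_tiling] by (subst ln_le_cancel_iff) auto
    qed
    finally show ?thesis
      using n(2) by (simp add: field_simps)
  qed
  then have "\<forall>\<^sub>F n in sequentially. c * ln 2 \<le> ln (pattern_count KC n) / (real n)\<^sup>2"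
    by (rule eventually_mono[OF eventually_conj[OF sites eventually_gt_at_top[of 0]]])
      (simp_all add: entropy_ge)
  then show ?thesis
    using c by (intro exI[of _ "c * ln 2"]) auto
qed

theorem mainTheorem1:
  shows "(\<exists>f. is_tiling KC f) \<and>
         (\<exists>H > 0. (\<lambda>n. ln (real (pattern_count KC n)) / (real n)^2) \<longlonglongrightarrow> H)"
proof -
  let ?H = "INF n\<in>{1..}. ln (real (pattern_count KC n)) / (real n)\<^sup>2"
  have limit: "(\<lambda>n. ln (real (pattern_count KC n)) / (real n)\<^sup>2) \<longlonglongrightarrow> ?H"
    by (rule pattern_entropy_tendsto_INF[OF finite_KC kc_canonical_tiling])
  obtain c where "0 < c" "\<forall>\<^sub>F n in sequentially. c \<le> ln (pattern_count KC n) / (real n)\<^sup>2"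
    using kc_pattern_entropy_eventually_ge by blast
  then have "0 < ?H"
    using tendsto_lowerbound[OF limit] by fastforce
  then show ?thesis
    using kc_canonical_tiling limit by blast
qed

end
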